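(* Let $X$ be a nonempty set, $Y$ a nonempty set, and $F\colon X^*\to Y$ a function. The following assertions are equivalent. (i) $F$ is unarily idempotizable, i.e., $\mathrm{ran}(F_1)=\mathrm{ran}(F^{\flat})$ and $F_1$ is one-to-one. (ii) $F_1$ is a bijection from $X$ onto $\mathrm{ran}(F^{\flat})$ and there is a unique unarily idempotent $\varepsilon$-standard operation $H\colon X^*\to X\cup\{\varepsilon\}$, namely the one with $H^{\flat}=F_1^{-1}\circ F^{\flat}$, such that $F^{\flat}=F_1\circ H^{\flat}$. (iii) There exist a unarily idempotent $\varepsilon$-standard operation $H\colon X^*\to X\cup\{\varepsilon\}$ and a bijection $f$ from $X$ onto $\mathrm{ran}(F^{\flat})$ such that $F^{\flat}=f\circ H^{\flat}$. Moreover, in case (iii) we necessarily have $f=F_1$ and $H^{\flat}=F_1^{-1}\circ F^{\flat}$.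
   Context: $X^*=\bigcup_{n\geqslant 0}X^n$ is the set of all finite tuples over $X$, where $X^0=\{\varepsilon\}$ and $\varepsilon$ is the empty tuple (assumed not to be an element of $X$). For $F\colon X^*\to Y$ and $n\geqslant 0$, $F_n=F|_{X^n}$ is the $n$-ary part of $F$ (with $X^1$ identified with $X$), and $F^{\flat}=F|_{X^*\setminus\{\varepsilon\}}$ is its non-nullary part. A function $F\colon X^*\to Y$ is standard if $F(\mathbf{x})=F(\varepsilon)$ holds only if $\mathbf{x}=\varepsilon$. A variadic operation on $X$ is a function $F\colon X^*\to X\cup\{\varepsilon\}$; it is $\varepsilon$-standard if it is standard and $F(\varepsilon)=\varepsilon$. An $\varepsilon$-standard operation $H$ is unarily idempotent if $H_1$ is the identity map of $X$. *)

theory Defs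
  imports Main
begin

text \<open>X is the type 'a, Y the type 'b (types are nonempty). X^* is 'a list,
 with [] the empty tuple epsilon. A variadic operation X^* -> X \<union> {epsilon}
 is a function 'a list => 'a option, None playing the role of epsilon.\<close>

definition standard :: "('a list \<Rightarrow> 'c) \<Rightarrow> bool" where
  "standard F \<longleftrightarrow> (\<forall>xs. F xs = F [] \<longrightarrow> xs = [])"

definition eps_standard :: "('a list \<Rightarrow> 'a option) \<Rightarrow> bool" where
  "eps_standard H \<longleftrightarrow> standard H \<and> H [] = None"

definition unarily_idempotent :: "('a list \<Rightarrow> 'a option) \<Rightarrow> bool" where
  "unarily_idempotent H \<longleftrightarrow> eps_standard H \<and> (\<forall>x. H [x] = Some x)"

definition ran_flat :: "('a list \<Rightarrow> 'b) \<Rightarrow> 'b set" where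
  "ran_flat F = F ` {xs. xs \<noteq> []}"

definition unarily_idempotizable :: "('a list \<Rightarrow> 'b) \<Rightarrow> bool" where
  "unarily_idempotizable F \<longleftrightarrow>
     range (\<lambda>x. F [x]) = ran_flat F \<and> inj (\<lambda>x. F [x])"

end

theory Submission
  imports Defs
begin

text \<open>Writing \<open>F\<^sub>1 x = F [x]\<close>, a factorisation \<open>F\<^sup>\<flat> = f \<circ> H\<^sup>\<flat>\<close> through a unarily
  idempotent \<open>H\<close> evaluated at a one-element tuple gives \<open>f = F\<^sub>1\<close>; if moreover \<open>F\<^sub>1\<close> is
  injective, \<open>F xs = F\<^sub>1 (H xs)\<close> forces \<open>H xs = F\<^sub>1\<^sup>-\<^sup>1 (F xs)\<close>. Conversely, when \<open>F\<^sub>1\<close> is a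
  bijection onto the range of \<open>F\<^sup>\<flat>\<close>, the operation \<open>F\<^sub>1\<^sup>-\<^sup>1 \<circ> F\<^sup>\<flat>\<close> (extended by
  \<open>\<epsilon> \<mapsto> \<epsilon>\<close>) is unarily idempotent and factors \<open>F\<close>.\<close>

lemma unarily_idempotizable_iff_bij_betw:
  "unarily_idempotizable F \<longleftrightarrow> bij_betw (\<lambda>x. F [x]) UNIV (ran_flat F)"
  unfolding unarily_idempotizable_def bij_betw_def by auto

lemma eps_standard_nonempty_not_None:
  assumes "eps_standard H" and "xs \<noteq> []"
  shows "H xs \<noteq> None"
  using assms unfolding eps_standard_def standard_def by auto

definition unary_inverse_op :: "('a list \<Rightarrow> 'b) \<Rightarrow> 'a list \<Rightarrow> 'a option" where
  "unary_inverse_op F xs = (if xs = [] then None else Some (the_inv (\<lambda>x. F [x]) (F xs)))"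

lemma factor_eq_unary_part:
  assumes "unarily_idempotent H"
    and "\<forall>xs. xs \<noteq> [] \<longrightarrow> F xs = f (the (H xs))"
  shows "f = (\<lambda>x. F [x])"
proof
  fix x
  have "H [x] = Some x" using assms(1) unfolding unarily_idempotent_def by blast
  then show "f x = F [x]" using assms(2) by (metis list.distinct(1) option.sel)
qed

lemma factor_op_eq_unary_inverse_op:
  assumes "unarily_idempotent H"
    and "inj (\<lambda>x. F [x])"
    and "\<forall>xs. xs \<noteq> [] \<longrightarrow> F xs = F [the (H xs)]"
  shows "H = unary_inverse_op F"
proof
  fix xs :: "'a list"
  have eps: "eps_standard H" using assms(1) unfolding unarily_idempotent_def by blast
  show "H xs = unary_inverse_op F xs"
  proof (cases "xs = []")
    case True
    then show ?thesis using eps unfolding eps_standard_def unary_inverse_op_def by simp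
  next
    case False
    have "the_inv (\<lambda>x. F [x]) (F xs) = the (H xs)"
      using assms(3) False the_inv_f_f[OF assms(2)] by metis
    moreover have "H xs = Some (the (H xs))"
      using eps_standard_nonempty_not_None[OF eps False] by simp
    ultimately show ?thesis using False unfolding unary_inverse_op_def by simp
  qed
qed

lemma unary_inverse_op_factors:
  assumes "bij_betw (\<lambda>x. F [x]) UNIV (ran_flat F)"
  shows "unarily_idempotent (unary_inverse_op F)"
    and "\<forall>xs. xs \<noteq> [] \<longrightarrow> F xs = F [the (unary_inverse_op F xs)]"
proof -
  have inj: "inj (\<lambda>x. F [x])" using assms bij_betw_def by blast
  have "eps_standard (unary_inverse_op F)"
    unfolding eps_standard_def standard_def unary_inverse_op_def by auto
  then show "unarily_idempotent (unary_inverse_op F)"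
    unfolding unarily_idempotent_def unary_inverse_op_def using the_inv_f_f[OF inj] by simp
  show "\<forall>xs. xs \<noteq> [] \<longrightarrow> F xs = F [the (unary_inverse_op F xs)]"
  proof (intro allI impI)
    fix xs :: "'a list"
    assume "xs \<noteq> []"
    then have "F xs \<in> range (\<lambda>x. F [x])"
      using assms unfolding bij_betw_def ran_flat_def by auto
    then have "F [the_inv (\<lambda>x. F [x]) (F xs)] = F xs" by (rule f_the_inv_into_f[OF inj])
    with \<open>xs \<noteq> []\<close> show "F xs = F [the (unary_inverse_op F xs)]"
      unfolding unary_inverse_op_def by simp
  qed
qed

lemma factorization_canonical:
  assumes "unarily_idempotent H"
    and "bij_betw f UNIV (ran_flat F)"
    and "\<forall>xs. xs \<noteq> [] \<longrightarrow> F xs = f (the (H xs))"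
  shows "f = (\<lambda>x. F [x])" and "H = unary_inverse_op F"
proof -
  show f: "f = (\<lambda>x. F [x])" using factor_eq_unary_part assms(1,3) .
  from assms(2) f have "inj (\<lambda>x. F [x])" by (simp add: bij_betw_def)
  \<comment> \<open>not by simp: the factorisation hypothesis then rewrites \<open>F xs\<close> to \<open>F [the (H xs)]\<close> forever\<close>
  moreover have "\<forall>xs. xs \<noteq> [] \<longrightarrow> F xs = F [the (H xs)]" using assms(3) unfolding f .
  ultimately show "H = unary_inverse_op F" by (rule factor_op_eq_unary_inverse_op[OF assms(1)])
qed

lemma ex1_factor_op:
  assumes "bij_betw (\<lambda>x. F [x]) UNIV (ran_flat F)"
  shows "\<exists>!H. unarily_idempotent H \<and> eps_standard H \<and>
    (\<forall>xs. xs \<noteq> [] \<longrightarrow> F xs = F [the (H xs)])"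
proof (rule ex1I)
  show "unarily_idempotent (unary_inverse_op F) \<and> eps_standard (unary_inverse_op F) \<and>
    (\<forall>xs. xs \<noteq> [] \<longrightarrow> F xs = F [the (unary_inverse_op F xs)])"
    using unary_inverse_op_factors[OF assms] unfolding unarily_idempotent_def by blast
next
  fix H
  assume "unarily_idempotent H \<and> eps_standard H \<and> (\<forall>xs. xs \<noteq> [] \<longrightarrow> F xs = F [the (H xs)])"
  then show "H = unary_inverse_op F" using factorization_canonical(2) assms by blast
qed

lemma factorization_determined:
  "\<forall>H f. unarily_idempotent H \<and> eps_standard H \<and> bij_betw f UNIV (ran_flat F) \<and>
      (\<forall>xs. xs \<noteq> [] \<longrightarrow> F xs = f (the (H xs))) \<longrightarrow>
    f = (\<lambda>x. F [x]) \<and> (\<forall>xs. xs \<noteq> [] \<longrightarrow> H xs = Some (the_inv (\<lambda>x. F [x]) (F xs)))"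
proof (intro allI impI, elim conjE)
  fix H and f :: "'a \<Rightarrow> 'b"
  assume "unarily_idempotent H" "bij_betw f UNIV (ran_flat F)"
    "\<forall>xs. xs \<noteq> [] \<longrightarrow> F xs = f (the (H xs))"
  from factorization_canonical[OF this]
  show "f = (\<lambda>x. F [x]) \<and> (\<forall>xs. xs \<noteq> [] \<longrightarrow> H xs = Some (the_inv (\<lambda>x. F [x]) (F xs)))"
    by (simp add: unary_inverse_op_def)
qed

lemma unarily_idempotizable_iff_factorization:
  "unarily_idempotizable F \<longleftrightarrow>
    (\<exists>H f. unarily_idempotent H \<and> eps_standard H \<and> bij_betw f UNIV (ran_flat F) \<and>
      (\<forall>xs. xs \<noteq> [] \<longrightarrow> F xs = f (the (H xs))))" (is "_ \<longleftrightarrow> ?factorizes")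
proof
  assume "unarily_idempotizable F"
  then have bij: "bij_betw (\<lambda>x. F [x]) UNIV (ran_flat F)"
    by (simp add: unarily_idempotizable_iff_bij_betw)
  note factors = unary_inverse_op_factors[OF bij]
  moreover from factors(1) have "eps_standard (unary_inverse_op F)"
    by (simp add: unarily_idempotent_def)
  ultimately show ?factorizes
    using bij by (intro exI conjI)
next
  assume ?factorizes
  then obtain H f where "unarily_idempotent H" "bij_betw f UNIV (ran_flat F)"
      "\<forall>xs. xs \<noteq> [] \<longrightarrow> F xs = f (the (H xs))"
    by blast
  then have "f = (\<lambda>x. F [x])" by (rule factorization_canonical(1))
  with \<open>bij_betw f UNIV (ran_flat F)\<close> show "unarily_idempotizable F"
    by (simp add: unarily_idempotizable_iff_bij_betw)
qed

lemma unarily_idempotizable_iff_unique_factor_op: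
  "unarily_idempotizable F \<longleftrightarrow>
    bij_betw (\<lambda>x. F [x]) UNIV (ran_flat F) \<and>
    (\<exists>!H. unarily_idempotent H \<and> eps_standard H \<and>
      (\<forall>xs. xs \<noteq> [] \<longrightarrow> F xs = F [the (H xs)])) \<and>
    (\<forall>H. unarily_idempotent H \<and> eps_standard H \<and>
      (\<forall>xs. xs \<noteq> [] \<longrightarrow> F xs = F [the (H xs)]) \<longrightarrow>
      (\<forall>xs. xs \<noteq> [] \<longrightarrow> H xs = Some (the_inv (\<lambda>x. F [x]) (F xs))))"
  (is "_ \<longleftrightarrow> ?bij \<and> ?unique \<and> ?determined")
proof
  assume "unarily_idempotizable F"
  then have bij: "bij_betw (\<lambda>x. F [x]) UNIV (ran_flat F)"
    by (simp add: unarily_idempotizable_iff_bij_betw)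
  have ?determined using factorization_determined[of F] bij by blast
  with bij ex1_factor_op[OF bij] show "?bij \<and> ?unique \<and> ?determined" by (intro conjI)
qed (use unarily_idempotizable_iff_bij_betw in blast)

theorem corollary2p3:
  fixes F :: "'a list \<Rightarrow> 'b"
  shows "(unarily_idempotizable F \<longleftrightarrow>
          (bij_betw (\<lambda>x. F [x]) UNIV (ran_flat F) \<and>
           (\<exists>!H. unarily_idempotent H \<and> eps_standard H \<and>
                 (\<forall>xs. xs \<noteq> [] \<longrightarrow> F xs = F [the (H xs)])) \<and>
           (\<forall>H. unarily_idempotent H \<and> eps_standard H \<and>
                 (\<forall>xs. xs \<noteq> [] \<longrightarrow> F xs = F [the (H xs)]) \<longrightarrow>
                 (\<forall>xs. xs \<noteq> [] \<longrightarrow> H xs = Some (the_inv (\<lambda>x. F [x]) (F xs))))))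
       \<and> (unarily_idempotizable F \<longleftrightarrow>
          (\<exists>H f. unarily_idempotent H \<and> eps_standard H \<and>
                 bij_betw f UNIV (ran_flat F) \<and>
                 (\<forall>xs. xs \<noteq> [] \<longrightarrow> F xs = f (the (H xs)))))
       \<and> (\<forall>H f. unarily_idempotent H \<and> eps_standard H \<and>
                 bij_betw f UNIV (ran_flat F) \<and>
                 (\<forall>xs. xs \<noteq> [] \<longrightarrow> F xs = f (the (H xs))) \<longrightarrow>
              f = (\<lambda>x. F [x]) \<and>
              (\<forall>xs. xs \<noteq> [] \<longrightarrow> H xs = Some (the_inv (\<lambda>x. F [x]) (F xs))))"
  using unarily_idempotizable_iff_unique_factor_op unarily_idempotizable_iff_factorization
    factorization_determined
  by (intro conjI)

end
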